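(* Let $a,n\in\mathbb{Z}^+$ with $a>1$. Then $$\sqrt[n]{a} = \lim_{k\to\infty}\frac{(k^{kn}+1)^{kn+1}\bmod (k^{kn^2}-a)}{(k^{kn}+1)^{kn}\bmod (k^{kn^2}-a)} - 1\quad\text{(in }\mathbb{R}),$$ where the limit is over positive integers $k$.
   Context: For integers, $u\bmod m$ denotes the least non-negative remainder of $u$ upon division by $m>0$. $\sqrt[n]{a}$ denotes the positive real $n$-th root of $a$. *)

theory Defs
  imports "HOL-Analysis.Analysis"
begin

end

theory Submission
  imports Defs
begin

text \<open>Write N = k^(kn), so that the modulus is N^n - a. Modulo N^n - a, every power N^i of the
  binomial expansion of (N + 1)^m may be replaced by a^(i div n) N^(i mod n); for m \<le> kn + 1 and
  k large the resulting sum is already smaller than the modulus, hence it is the remainder. Its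
  dominant part is N^(n-1) times the sum of binom(m,i) a^(i div n) over i = -1 (mod n), which with
  \<alpha> = a^(1/n) equals \<alpha>/a times the sum of binom(m,i) \<alpha>^i over the same i. By the
  roots-of-unity filter the latter is asymptotic to (1 + \<alpha>)^m / n. The other terms are at most
  N^(n-2) (1 + a)^m, which is negligible because N = k^(kn) outgrows (1 + a)^(kn). So the ratio of
  the remainders for m = kn + 1 and m = kn tends to 1 + \<alpha>.\<close>

definition primitive_root_unity :: "nat \<Rightarrow> complex" where
  "primitive_root_unity n = cis (2 * pi / real n)"

lemma primitive_root_unity_pow_eq_1_iff:
  assumes "n > 0"
  shows "primitive_root_unity n ^ t = 1 \<longleftrightarrow> n dvd t"
proof -
  have "primitive_root_unity n ^ t = exp (2 * of_real pi * \<i> * of_nat t / of_nat n)"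
    by (simp add: primitive_root_unity_def cis_conv_exp exp_of_nat_mult [symmetric] mult_ac)
  then show ?thesis
    using complex_root_unity_eq_1 [of n t] assms by simp
qed

lemma norm_primitive_root_unity_pow [simp]: "norm (primitive_root_unity n ^ t) = 1"
  by (simp add: primitive_root_unity_def norm_power)

lemma sum_primitive_root_unity_powers:
  assumes "n > 0"
  shows "(\<Sum>j<n. (primitive_root_unity n ^ t) ^ j) = (if n dvd t then of_nat n else 0)"
proof (cases "n dvd t")
  case True
  then have "primitive_root_unity n ^ t = 1"
    using primitive_root_unity_pow_eq_1_iff [OF assms] by simp
  then show ?thesis
    using True by simp
next
  case False
  have "(primitive_root_unity n ^ t) ^ n = (primitive_root_unity n ^ n) ^ t"
    by (simp flip: power_mult add: mult.commute)
  also have "\<dots> = 1"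
    using primitive_root_unity_pow_eq_1_iff [OF assms, of n] by simp
  finally show ?thesis
    using False primitive_root_unity_pow_eq_1_iff [OF assms, of t] by (simp add: sum_gp_strict)
qed

lemma binomial_ring_one:
  fixes x :: "'a::comm_semiring_1"
  shows "(1 + x) ^ m = (\<Sum>i\<le>m. of_nat (m choose i) * x ^ i)"
  using binomial_ring [of x 1 m] by (simp add: add.commute)

definition binomial_residue_sum :: "nat \<Rightarrow> nat \<Rightarrow> real \<Rightarrow> real" where
  "binomial_residue_sum n m x = (\<Sum>i\<le>m. if n dvd i + 1 then real (m choose i) * x ^ i else 0)"

lemma roots_of_unity_filter:
  assumes n: "n > 0"
  defines "\<omega> \<equiv> primitive_root_unity n"
  shows "of_nat n * of_real (binomial_residue_sum n m x)
       = (\<Sum>j<n. \<omega> ^ j * (1 + of_real x * \<omega> ^ j) ^ m)"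
proof -
  have "(\<Sum>j<n. \<omega> ^ j * (1 + of_real x * \<omega> ^ j) ^ m)
      = (\<Sum>j<n. \<Sum>i\<le>m. of_nat (m choose i) * of_real x ^ i * (\<omega> ^ (i + 1)) ^ j)"
    by (simp only: binomial_ring_one sum_distrib_left)
      (simp add: power_mult_distrib power_add ring_distribs mult_ac flip: power_mult)
  also have "\<dots> = (\<Sum>i\<le>m. of_nat (m choose i) * of_real x ^ i * (\<Sum>j<n. (\<omega> ^ (i + 1)) ^ j))"
    by (subst sum.swap) (simp add: sum_distrib_left)
  also have "\<dots> = of_nat n * of_real (binomial_residue_sum n m x)"
    unfolding \<omega>_def sum_primitive_root_unity_powers [OF n]
    by (simp add: binomial_residue_sum_def sum_distrib_left if_distrib mult_ac cong: if_cong)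
  finally show ?thesis ..
qed

lemma norm_one_plus_unit_less:
  fixes z :: complex
  assumes "norm z = 1" "z \<noteq> 1" "x > 0"
  shows "norm (1 + of_real x * z) < 1 + x"
proof -
  have "norm (1 + of_real x * z) \<le> norm (1 :: complex) + norm (of_real x * z)"
    by (rule norm_triangle_ineq)
  moreover have "norm (1 + of_real x * z) \<noteq> norm (1 :: complex) + norm (of_real x * z)"
  proof
    assume "norm (1 + of_real x * z) = norm (1 :: complex) + norm (of_real x * z)"
    then have "norm (1 :: complex) *\<^sub>R (of_real x * z) = norm (of_real x * z) *\<^sub>R 1"
      by (rule norm_triangle_eq [THEN iffD1])
    then have "of_real x * z = of_real x"
      using assms by (simp add: norm_mult scaleR_conv_of_real)
    then show False
      using assms by simp
  qed
  ultimately show ?thesis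
    using assms by (simp add: norm_mult)
qed

lemma binomial_residue_sum_asymptotic:
  assumes n: "n > 0" and x: "x > 0"
  shows "(\<lambda>m. binomial_residue_sum n m x / (1 + x) ^ m) \<longlonglongrightarrow> 1 / real n"
proof -
  define \<omega> where "\<omega> = primitive_root_unity n"
  have norm_1x: "norm (1 + complex_of_real x) = 1 + x"
    using x by (metis norm_of_real of_real_1 of_real_add abs_of_pos add_pos_pos zero_less_one)
  have "(\<lambda>m. \<omega> ^ j * ((1 + of_real x * \<omega> ^ j) / (1 + of_real x)) ^ m)
          \<longlonglongrightarrow> (if j = 0 then 1 else 0)" if "j < n" for j
  proof (cases "j = 0")
    case True
    then show ?thesis
      using norm_1x x by (auto simp del: norm_of_real)
  next
    case False
    then have "\<omega> ^ j \<noteq> 1"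
      using primitive_root_unity_pow_eq_1_iff [OF n, of j] \<open>j < n\<close> by (auto simp: \<omega>_def dest: dvd_imp_le)
    then have "norm ((1 + of_real x * \<omega> ^ j) / (1 + of_real x)) < 1"
      using norm_one_plus_unit_less [of "\<omega> ^ j" x] x norm_1x by (simp add: \<omega>_def norm_divide)
    then show ?thesis
      using False by (simp add: tendsto_mult_right_zero LIMSEQ_power_zero)
  qed
  then have "(\<lambda>m. \<Sum>j<n. \<omega> ^ j * ((1 + of_real x * \<omega> ^ j) / (1 + of_real x)) ^ m)
               \<longlonglongrightarrow> (\<Sum>j<n. if j = 0 then 1 else 0)"
    by (intro tendsto_sum) simp
  also have "(\<lambda>m. \<Sum>j<n. \<omega> ^ j * ((1 + of_real x * \<omega> ^ j) / (1 + of_real x)) ^ m)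
           = (\<lambda>m. of_real (real n * (binomial_residue_sum n m x / (1 + x) ^ m)))"
    by (simp add: roots_of_unity_filter [OF n] \<omega>_def power_divide
        flip: sum_divide_distrib)
  also have "(\<Sum>j<n. if j = 0 then 1 else 0) = (of_real 1 :: complex)"
    using n by simp
  finally have "(\<lambda>m. real n * (binomial_residue_sum n m x / (1 + x) ^ m)) \<longlonglongrightarrow> 1"
    by (simp only: tendsto_of_real_iff)
  from tendsto_divide [OF this tendsto_const, of "real n"] show ?thesis
    using n by simp
qed

definition binomial_reduced :: "nat \<Rightarrow> nat \<Rightarrow> nat \<Rightarrow> 'a::comm_semiring_1 \<Rightarrow> 'a" where
  "binomial_reduced a n m N = (\<Sum>i\<le>m. of_nat (m choose i) * of_nat a ^ (i div n) * N ^ (i mod n))"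

lemma of_int_binomial_reduced [simp]:
  "of_int (binomial_reduced a n m N) = binomial_reduced a n m (of_int N)"
  by (simp add: binomial_reduced_def)

lemma power_mod_reduce:
  fixes N c :: "'a::euclidean_ring_cancel"
  shows "N ^ i mod (N ^ n - c) = c ^ (i div n) * N ^ (i mod n) mod (N ^ n - c)"
proof -
  define M where "M = N ^ n - c"
  have "N ^ n mod M = c mod M"
    using mod_add_self2 [of c M] by (simp add: M_def)
  then have "(N ^ n) ^ (i div n) mod M = c ^ (i div n) mod M"
    by (metis power_mod)
  then have "(N ^ n) ^ (i div n) * N ^ (i mod n) mod M = c ^ (i div n) * N ^ (i mod n) mod M"
    by (metis mod_mult_left_eq)
  moreover have "N ^ i = (N ^ n) ^ (i div n) * N ^ (i mod n)"
    by (simp flip: power_mult power_add)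
  ultimately show ?thesis
    by (simp add: M_def)
qed

lemma binomial_reduced_mod:
  fixes N :: "'a::euclidean_ring_cancel"
  shows "(N + 1) ^ m mod (N ^ n - of_nat a) = binomial_reduced a n m N mod (N ^ n - of_nat a)"
proof -
  define M where "M = N ^ n - of_nat a"
  have reduce_term: "of_nat (m choose i) * N ^ i mod M
            = of_nat (m choose i) * of_nat a ^ (i div n) * N ^ (i mod n) mod M" for i
  proof -
    have "of_nat (m choose i) * N ^ i mod M = of_nat (m choose i) * (N ^ i mod M) mod M"
      by (rule mod_mult_right_eq [symmetric])
    also have "N ^ i mod M = of_nat a ^ (i div n) * N ^ (i mod n) mod M"
      unfolding M_def by (rule power_mod_reduce)
    also have "of_nat (m choose i) * (of_nat a ^ (i div n) * N ^ (i mod n) mod M) mod M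
             = of_nat (m choose i) * (of_nat a ^ (i div n) * N ^ (i mod n)) mod M"
      by (rule mod_mult_right_eq)
    finally show ?thesis
      by (simp only: mult.assoc)
  qed
  have "(N + 1) ^ m = (\<Sum>i\<le>m. of_nat (m choose i) * N ^ i)"
    by (simp add: binomial_ring_one add.commute [of N])
  then have "(N + 1) ^ m mod M = (\<Sum>i\<le>m. of_nat (m choose i) * N ^ i mod M) mod M"
    by (simp add: mod_sum_eq)
  also have "\<dots> = binomial_reduced a n m N mod M"
    by (simp only: reduce_term mod_sum_eq binomial_reduced_def)
  finally show ?thesis
    unfolding M_def .
qed

lemma binomial_reduced_nonneg:
  fixes N :: "'a::linordered_semidom"
  assumes "N \<ge> 0"
  shows "binomial_reduced a n m N \<ge> 0"
  using assms by (simp add: binomial_reduced_def sum_nonneg)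

lemma binomial_reduced_le:
  fixes N :: "'a::linordered_semidom"
  assumes "n > 0" "N \<ge> 1" "a \<ge> 1"
  shows "binomial_reduced a n m N \<le> N ^ (n - 1) * (1 + of_nat a) ^ m"
proof -
  have "N \<ge> 0"
    using assms(2) zero_le_one order.trans by blast
  have "binomial_reduced a n m N \<le> (\<Sum>i\<le>m. of_nat (m choose i) * of_nat a ^ i * N ^ (n - 1))"
    unfolding binomial_reduced_def
  proof (rule sum_mono)
    fix i
    have "N ^ (i mod n) \<le> N ^ (n - 1)"
      using assms by (intro power_increasing) (auto simp: less_Suc_eq_le [symmetric])
    moreover have "(of_nat a :: 'a) ^ (i div n) \<le> of_nat a ^ i"
      using assms by (intro power_increasing) auto
    ultimately show "of_nat (m choose i) * of_nat a ^ (i div n) * N ^ (i mod n)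
                     \<le> of_nat (m choose i) * of_nat a ^ i * N ^ (n - 1)"
      using assms \<open>N \<ge> 0\<close> by (intro mult_mono mult_left_mono) auto
  qed
  also have "\<dots> = N ^ (n - 1) * (1 + of_nat a) ^ m"
    by (simp add: binomial_ring_one sum_distrib_left mult_ac)
  finally show ?thesis .
qed

lemma dvd_Suc_iff_mod_eq:
  fixes i n :: nat
  assumes "n > 0"
  shows "n dvd i + 1 \<longleftrightarrow> i mod n = n - 1"
  using assms by (auto simp: dvd_eq_mod_eq_0 mod_Suc)

lemma power_div_mult_eq_power_Suc:
  fixes \<alpha> c :: "'a::comm_monoid_mult"
  assumes "n > 0" "\<alpha> ^ n = c" "n dvd i + 1"
  shows "c ^ (i div n) * c = \<alpha> ^ (i + 1)"
proof -
  have "i mod n = n - 1"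
    using assms dvd_Suc_iff_mod_eq by blast
  then have "i + 1 = n * (i div n + 1)"
    using div_mult_mod_eq [of i n] assms(1) by (simp add: algebra_simps)
  then show ?thesis
    using assms(2) by (metis power_mult power_Suc2 Suc_eq_plus1)
qed

lemma binomial_reduced_main_term:
  fixes N \<alpha> :: real and m :: nat
  assumes n: "n > 0" and N: "N \<ge> 1" and a: "a \<ge> 1" and \<alpha>: "\<alpha> > 0" "\<alpha> ^ n = real a"
  defines "R \<equiv> binomial_reduced a n m N - N ^ (n - 1) * (\<alpha> / real a) * binomial_residue_sum n m \<alpha>"
  shows "0 \<le> R" and "R * N \<le> N ^ (n - 1) * (1 + real a) ^ m"
proof -
  have residue_class_power: "real a ^ (i div n) = \<alpha> / real a * \<alpha> ^ i" if "n dvd i + 1" for i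
    using power_div_mult_eq_power_Suc [OF n \<alpha>(2) that] a by (simp add: field_simps)
  have R_eq: "R = (\<Sum>i\<le>m. if n dvd i + 1 then 0
                            else real (m choose i) * real a ^ (i div n) * N ^ (i mod n))"
    unfolding R_def binomial_reduced_def binomial_residue_sum_def sum_distrib_left
      sum_subtractf [symmetric]
  proof (intro sum.cong refl)
    fix i
    show "real (m choose i) * real a ^ (i div n) * N ^ (i mod n)
          - N ^ (n - 1) * (\<alpha> / real a) * (if n dvd i + 1 then real (m choose i) * \<alpha> ^ i else 0)
        = (if n dvd i + 1 then 0 else real (m choose i) * real a ^ (i div n) * N ^ (i mod n))"
    proof (cases "n dvd i + 1")
      case True
      then have "i mod n = n - 1"
        using dvd_Suc_iff_mod_eq [OF n] by blast
      then show ?thesis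
        using True residue_class_power [OF True] by simp
    qed simp
  qed
  show "0 \<le> R"
    unfolding R_eq using N by (intro sum_nonneg) auto
  have "R * N \<le> (\<Sum>i\<le>m. real (m choose i) * real a ^ i * N ^ (n - 1))"
    unfolding R_eq sum_distrib_right
  proof (rule sum_mono)
    fix i
    show "(if n dvd i + 1 then 0 else real (m choose i) * real a ^ (i div n) * N ^ (i mod n)) * N
          \<le> real (m choose i) * real a ^ i * N ^ (n - 1)"
    proof (cases "n dvd i + 1")
      case False
      then have "i mod n + 1 \<le> n - 1"
        using dvd_Suc_iff_mod_eq [OF n, of i] mod_less_divisor [OF n, of i] by linarith
      then have "N ^ (i mod n) * N \<le> N ^ (n - 1)"
        using N by (metis power_Suc2 Suc_eq_plus1 power_increasing)
      moreover have "real a ^ (i div n) \<le> real a ^ i"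
        using a by (intro power_increasing) auto
      ultimately show ?thesis
        using False N by (simp add: mult.assoc mult_mono)
    qed (use N in simp)
  qed
  also have "\<dots> = N ^ (n - 1) * (1 + real a) ^ m"
    by (simp add: binomial_ring_one sum_distrib_left mult_ac)
  finally show "R * N \<le> N ^ (n - 1) * (1 + real a) ^ m" .
qed

lemma LIMSEQ_power_div_self_power:
  fixes c :: real
  assumes "c \<ge> 0" "n > 0"
  shows "(\<lambda>k. c ^ (k * n + j) / real k ^ (k * n)) \<longlonglongrightarrow> 0"
proof (rule tendsto_sandwich [of "\<lambda>_. 0" _ _ "\<lambda>k. c ^ j * (1 / 2) ^ k"])
  show "\<forall>\<^sub>F k in sequentially. 0 \<le> c ^ (k * n + j) / real k ^ (k * n)"
    using assms by simp
  show "\<forall>\<^sub>F k in sequentially. c ^ (k * n + j) / real k ^ (k * n) \<le> c ^ j * (1 / 2) ^ k"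
    using eventually_ge_at_top [of "nat \<lceil>2 * c\<rceil> + 1"]
  proof eventually_elim
    case (elim k)
    have "c / real k \<le> 1 / 2"
      using elim assms by (simp add: field_simps) linarith
    have "c ^ (k * n + j) / real k ^ (k * n) = c ^ j * (c / real k) ^ (k * n)"
      by (simp add: power_add power_divide)
    also have "\<dots> \<le> c ^ j * (1 / 2) ^ (k * n)"
      using \<open>c / real k \<le> 1 / 2\<close> assms by (intro mult_left_mono power_mono) auto
    also have "\<dots> \<le> c ^ j * (1 / 2) ^ k"
      using assms by (intro mult_left_mono power_decreasing) auto
    finally show ?case .
  qed
  show "(\<lambda>k. c ^ j * (1 / 2 :: real) ^ k) \<longlonglongrightarrow> 0"
    by (intro tendsto_mult_right_zero LIMSEQ_power_zero) simp
qed simp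

lemma binomial_reduced_normalized_limit:
  assumes n: "n > 0" and a: "a \<ge> 1"
  defines "\<alpha> \<equiv> root n (real a)"
  shows "(\<lambda>k. binomial_reduced a n (k * n + j) (real k ^ (k * n))
              / ((real k ^ (k * n)) ^ (n - 1) * (1 + \<alpha>) ^ (k * n + j)))
         \<longlonglongrightarrow> \<alpha> / (real a * real n)"
proof -
  have \<alpha>: "\<alpha> > 0" "\<alpha> ^ n = real a"
    using n a by (simp_all add: \<alpha>_def)
  define N where "N k = real k ^ (k * n)" for k
  define x where "x k = binomial_reduced a n (k * n + j) (N k) / (N k ^ (n - 1) * (1 + \<alpha>) ^ (k * n + j))"
    for k
  define s where "s k = binomial_residue_sum n (k * n + j) \<alpha> / (1 + \<alpha>) ^ (k * n + j)" for k
  have "strict_mono (\<lambda>k. k * n + j)"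
    using n by (simp add: strict_mono_def)
  from LIMSEQ_subseq_LIMSEQ [OF binomial_residue_sum_asymptotic [OF n \<alpha>(1)] this]
  have s: "s \<longlonglongrightarrow> 1 / real n"
    by (simp add: s_def [abs_def] o_def)
  have "norm (x k - \<alpha> / real a * s k) \<le> (1 + real a) ^ (k * n + j) / real k ^ (k * n)"
    if "k \<ge> 1" for k
  proof -
    define m where "m = k * n + j"
    define R where "R = binomial_reduced a n m (N k) - N k ^ (n - 1) * (\<alpha> / real a) * binomial_residue_sum n m \<alpha>"
    have N: "N k \<ge> 1"
      using that by (simp add: N_def)
    have R: "0 \<le> R" "R * N k \<le> N k ^ (n - 1) * (1 + real a) ^ m"
      using binomial_reduced_main_term [OF n N a \<alpha>] by (simp_all add: R_def)
    have diff: "x k - \<alpha> / real a * s k = R / (N k ^ (n - 1) * (1 + \<alpha>) ^ m)"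
      using N \<alpha> by (simp add: x_def s_def R_def m_def field_simps)
    have "R / (N k ^ (n - 1) * (1 + \<alpha>) ^ m) \<le> R / N k ^ (n - 1)"
      using R N \<alpha> by (intro divide_left_mono) (auto simp: one_le_power)
    also have "\<dots> \<le> (1 + real a) ^ m / N k"
      using R N by (simp add: field_simps)
    finally have "R / (N k ^ (n - 1) * (1 + \<alpha>) ^ m) \<le> (1 + real a) ^ m / N k" .
    moreover have "0 \<le> R / (N k ^ (n - 1) * (1 + \<alpha>) ^ m)"
      using R N \<alpha> by simp
    ultimately show ?thesis
      unfolding diff real_norm_def by (simp add: m_def N_def)
  qed
  then have "(\<lambda>k. x k - \<alpha> / real a * s k) \<longlonglongrightarrow> 0"
    using n by (intro Lim_null_comparison [OF eventually_sequentiallyI LIMSEQ_power_div_self_power]) auto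
  then have "(\<lambda>k. (x k - \<alpha> / real a * s k) + \<alpha> / real a * s k) \<longlonglongrightarrow> 0 + \<alpha> / real a * (1 / real n)"
    by (intro tendsto_add tendsto_mult tendsto_const s)
  then show ?thesis
    by (simp add: x_def N_def)
qed

lemma binomial_reduced_ratio_limit:
  assumes n: "n > 0" and a: "a \<ge> 1"
  shows "(\<lambda>k. binomial_reduced a n (k * n + 1) (real k ^ (k * n))
              / binomial_reduced a n (k * n) (real k ^ (k * n)))
         \<longlonglongrightarrow> 1 + root n (real a)"
proof -
  define \<alpha> where "\<alpha> = root n (real a)"
  define c where "c = \<alpha> / (real a * real n)"
  define q where "q j k = binomial_reduced a n (k * n + j) (real k ^ (k * n))
                          / ((real k ^ (k * n)) ^ (n - 1) * (1 + \<alpha>) ^ (k * n + j))" for j k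
  have \<alpha>: "\<alpha> > 0"
    using n a by (simp add: \<alpha>_def)
  have "c \<noteq> 0"
    using \<alpha> a n by (simp add: c_def)
  have "q j \<longlonglongrightarrow> c" for j
    unfolding q_def c_def \<alpha>_def by (rule binomial_reduced_normalized_limit [OF n a])
  then have "(\<lambda>k. (1 + \<alpha>) * q 1 k / q 0 k) \<longlonglongrightarrow> (1 + \<alpha>) * c / c"
    using \<open>c \<noteq> 0\<close> by (intro tendsto_divide tendsto_mult tendsto_const)
  moreover have "\<forall>\<^sub>F k in sequentially. (1 + \<alpha>) * q 1 k / q 0 k
      = binomial_reduced a n (k * n + 1) (real k ^ (k * n)) / binomial_reduced a n (k * n) (real k ^ (k * n))"
    using eventually_ge_at_top [of 1]
  proof eventually_elim
    case (elim k)
    define P where "P = (real k ^ (k * n)) ^ (n - 1) * (1 + \<alpha>) ^ (k * n)"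
    have "P > 0"
      using elim \<alpha> by (simp add: P_def)
    have q1: "q 1 k = binomial_reduced a n (k * n + 1) (real k ^ (k * n)) / (P * (1 + \<alpha>))"
      and q0: "q 0 k = binomial_reduced a n (k * n) (real k ^ (k * n)) / P"
      by (simp_all add: q_def P_def mult_ac)
    show ?case
      unfolding q1 q0 using \<open>P > 0\<close> \<alpha> by simp
  qed
  ultimately show ?thesis
    using \<open>c \<noteq> 0\<close> by (simp add: \<alpha>_def Lim_transform_eventually)
qed

lemma power_add_less_self_power:
  fixes a k n :: nat
  assumes "n > 0" "k \<ge> 2 * (1 + a)"
  shows "(1 + a) ^ (k * n + 1) + a < k ^ (k * n)"
proof -
  have "(1 + a) ^ (k * n + 1) + a < 2 * (1 + a) ^ (k * n + 1)"
    using self_le_power [of "1 + a" "k * n + 1"] by simp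
  also have "\<dots> = (1 + a) ^ (k * n) * (2 * (1 + a))"
    by simp
  also have "\<dots> \<le> (1 + a) ^ (k * n) * 2 ^ (k * n)"
  proof -
    have "2 * (1 + a) < 2 ^ k"
      using assms(2) less_exp [of k] by linarith
    also have "\<dots> \<le> 2 ^ (k * n)"
      using assms by (intro power_increasing) auto
    finally have "2 * (1 + a) \<le> 2 ^ (k * n)"
      by simp
    then show ?thesis
      by (rule mult_left_mono) simp
  qed
  also have "\<dots> = (2 * (1 + a)) ^ (k * n)"
    by (metis power_mult_distrib mult.commute)
  also have "\<dots> \<le> k ^ (k * n)"
    using assms by (intro power_mono) auto
  finally show ?thesis .
qed

lemma binomial_reduced_less_modulus:
  fixes k :: nat
  assumes n: "n > 0" and a: "a \<ge> 1" and k: "k \<ge> 2 * (1 + a)" and m: "m \<le> k * n + 1"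
  shows "binomial_reduced a n m (int k ^ (k * n)) < (int k ^ (k * n)) ^ n - int a"
proof -
  define N where "N = int k ^ (k * n)"
  have N: "N \<ge> 1"
    using k by (simp add: N_def)
  have "binomial_reduced a n m N + int a \<le> N ^ (n - 1) * (1 + int a) ^ (k * n + 1) + N ^ (n - 1) * int a"
  proof (rule add_mono)
    have "binomial_reduced a n m N \<le> N ^ (n - 1) * (1 + int a) ^ m"
      using binomial_reduced_le [OF n N a] by simp
    also have "\<dots> \<le> N ^ (n - 1) * (1 + int a) ^ (k * n + 1)"
      using N m by (intro mult_left_mono power_increasing) auto
    finally show "binomial_reduced a n m N \<le> N ^ (n - 1) * (1 + int a) ^ (k * n + 1)" .
    show "int a \<le> N ^ (n - 1) * int a"
      using mult_right_mono [OF one_le_power [OF N, of "n - 1"], of "int a"] by simp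
  qed
  also have "\<dots> < N ^ (n - 1) * N"
  proof -
    have "(1 + int a) ^ (k * n + 1) + int a < N"
      using power_add_less_self_power [OF n k] unfolding N_def
      by (metis of_nat_1 of_nat_add of_nat_less_iff of_nat_power)
    then show ?thesis
      using N by (simp flip: distrib_left)
  qed
  also have "\<dots> = N ^ n"
    using n by (simp flip: power_Suc2)
  finally show ?thesis
    by (simp add: N_def)
qed

lemma power_mod_eq_binomial_reduced:
  fixes k :: nat
  assumes "n > 0" "a \<ge> 1" "k \<ge> 2 * (1 + a)" "m \<le> k * n + 1"
  shows "(int k ^ (k * n) + 1) ^ m mod (int k ^ (k * n^2) - int a)
       = binomial_reduced a n m (int k ^ (k * n))"
proof -
  have "int k ^ (k * n^2) = (int k ^ (k * n)) ^ n"
    by (simp add: power2_eq_square mult.assoc flip: power_mult)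
  then show ?thesis
    using binomial_reduced_mod [of "int k ^ (k * n)" m n a]
      binomial_reduced_less_modulus [OF assms] binomial_reduced_nonneg [of "int k ^ (k * n)" a n m]
    by simp
qed

theorem theorem6p2:
  fixes a n :: nat
  assumes "a > 1" and "n > 0"
  shows "((\<lambda>k::nat.
            real_of_int (((int k ^ (k * n) + 1) ^ (k * n + 1)) mod (int k ^ (k * n^2) - int a))
          / real_of_int (((int k ^ (k * n) + 1) ^ (k * n)) mod (int k ^ (k * n^2) - int a)) - 1)
         \<longlongrightarrow> root n (real a)) sequentially"
proof -
  have a: "a \<ge> 1"
    using assms(1) by simp
  have "(\<lambda>k. binomial_reduced a n (k * n + 1) (real k ^ (k * n))
             / binomial_reduced a n (k * n) (real k ^ (k * n)) - 1) \<longlonglongrightarrow> 1 + root n (real a) - 1"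
    by (intro tendsto_diff tendsto_const binomial_reduced_ratio_limit [OF assms(2) a])
  moreover have "\<forall>\<^sub>F k in sequentially.
      binomial_reduced a n (k * n + 1) (real k ^ (k * n)) / binomial_reduced a n (k * n) (real k ^ (k * n)) - 1
    = real_of_int (((int k ^ (k * n) + 1) ^ (k * n + 1)) mod (int k ^ (k * n^2) - int a))
      / real_of_int (((int k ^ (k * n) + 1) ^ (k * n)) mod (int k ^ (k * n^2) - int a)) - 1"
    using eventually_ge_at_top [of "2 * (1 + a)"]
  proof eventually_elim
    case (elim k)
    show ?case
      using power_mod_eq_binomial_reduced [OF assms(2) a elim, of "k * n"]
        power_mod_eq_binomial_reduced [OF assms(2) a elim, of "k * n + 1"]
      by simp
  qed
  ultimately show ?thesis
    by (simp add: Lim_transform_eventually)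
qed

end
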